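(* Let $M$ be an abelian group. If $M$ is an elementary abelian $2$-group (i.e. $x^2=1$ for all $x\in M$), then $(L_M,* )$ is an elementary abelian $2$-group. If $M$ is not an elementary abelian $2$-group, then $(L_M,* )$ is a nonassociative and noncommutative right Bol loop.
   Context: Let $M$ be an abelian group (written multiplicatively) and $K=\{1,a,b,c\}$ the Klein four-group. Set $L_M=K\times M$ with the operation $(A,x)*(B,y)=(AB,xy)$ if $B=1$, and $(A,x)*(B,y)=(AB,x^{-1}y)$ if $B\neq 1$. A right Bol loop is a loop satisfying $x((yz)y)=((xy)z)y$. *)

theory Defs
  imports Main
begin

datatype klein = K1 | Ka | Kb | Kc

fun kmul :: "klein \<Rightarrow> klein \<Rightarrow> klein" where
  "kmul K1 y = y"
| "kmul x K1 = x"
| "kmul Ka Ka = K1" | "kmul Ka Kb = Kc" | "kmul Ka Kc = Kb"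
| "kmul Kb Ka = Kc" | "kmul Kb Kb = K1" | "kmul Kb Kc = Ka"
| "kmul Kc Ka = Kb" | "kmul Kc Kb = Ka" | "kmul Kc Kc = K1"

text \<open>The abelian group M is written additively (type class ab_group_add):
  xy corresponds to x + y and x^{-1} to - x.
  L_M = K x M with (A,x)*(B,y) = (AB, xy) if B = 1, and (AB, x^{-1} y) otherwise.\<close>
definition LM_mul :: "klein \<times> 'm::ab_group_add \<Rightarrow> klein \<times> 'm \<Rightarrow> klein \<times> 'm" where
  "LM_mul p q = (case p of (A, x) \<Rightarrow> case q of (B, y) \<Rightarrow>
      if B = K1 then (kmul A B, x + y) else (kmul A B, - x + y))"

definition is_loop :: "('a \<Rightarrow> 'a \<Rightarrow> 'a) \<Rightarrow> bool" where
  "is_loop f \<longleftrightarrow> (\<exists>e. \<forall>x. f e x = x \<and> f x e = x)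
     \<and> (\<forall>a b. \<exists>!x. f a x = b) \<and> (\<forall>a b. \<exists>!y. f y a = b)"

definition right_bol_loop :: "('a \<Rightarrow> 'a \<Rightarrow> 'a) \<Rightarrow> bool" where
  "right_bol_loop f \<longleftrightarrow> is_loop f \<and>
     (\<forall>x y z. f x (f (f y z) y) = f (f (f x y) z) y)"

definition is_associative :: "('a \<Rightarrow> 'a \<Rightarrow> 'a) \<Rightarrow> bool" where
  "is_associative f \<longleftrightarrow> (\<forall>x y z. f (f x y) z = f x (f y z))"

definition is_commutative :: "('a \<Rightarrow> 'a \<Rightarrow> 'a) \<Rightarrow> bool" where
  "is_commutative f \<longleftrightarrow> (\<forall>x y. f x y = f y x)"

definition elem_ab_2group :: "('a \<Rightarrow> 'a \<Rightarrow> 'a) \<Rightarrow> bool" where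
  "elem_ab_2group f \<longleftrightarrow> is_associative f \<and> is_commutative f \<and>
     (\<exists>e. (\<forall>x. f e x = x \<and> f x e = x) \<and> (\<forall>x. f x x = e))"

end

theory Submission
  imports Defs
begin

text \<open>The second coordinate of a product is \<open>\<plusminus>x + y\<close>, the sign being \<open>-\<close> exactly when
  the right factor lies outside \<open>{1} \<times> M\<close>. Hence both division problems are solved
  explicitly, the Bol identity reduces to a check over the \<open>4\<^sup>3\<close> sign patterns coming from
  \<open>K\<close>, and the construction is an abelian group precisely when inversion on \<open>M\<close> is trivial.
  An element \<open>m\<close> with \<open>m\<^sup>2 \<noteq> 1\<close> separates \<open>((1,m)(a,1))(b,1) = (c,m)\<close> from
  \<open>(1,m)((a,1)(b,1)) = (c,m\<^sup>-\<^sup>1)\<close>, and \<open>(1,m)(a,1) = (a,m\<^sup>-\<^sup>1)\<close> from \<open>(a,1)(1,m) = (a,m)\<close>.\<close>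

lemma kmul_K1_right [simp]: "kmul A K1 = A"
  by (cases A) auto

lemma kmul_self [simp]: "kmul A A = K1"
  by (cases A) auto

lemma kmul_commute: "kmul A B = kmul B A"
  by (cases A; cases B) auto

lemma kmul_assoc: "kmul (kmul A B) C = kmul A (kmul B C)"
  by (cases A; cases B; cases C) auto

lemma kmul_eq_K1_iff: "kmul A B = K1 \<longleftrightarrow> A = B" "K1 = kmul A B \<longleftrightarrow> A = B"
  by (cases A; cases B; auto)+

lemma kmul_eq_iff_left: "kmul A X = B \<longleftrightarrow> X = kmul A B"
  by (cases A; cases B; cases X) auto

lemma kmul_eq_iff_right: "kmul Y A = B \<longleftrightarrow> Y = kmul B A"
  by (cases A; cases B; cases Y) auto

lemma LM_mul_Pair: "LM_mul (A, u) (B, v) = (kmul A B, (if B = K1 then u else - u) + v)"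
  by (simp add: LM_mul_def)

lemma LM_mul_Pair_exponent_two:
  fixes u v :: "'m::ab_group_add"
  assumes "\<forall>x::'m. x + x = 0"
  shows "LM_mul (A, u) (B, v) = (kmul A B, u + v)"
  using assms by (simp add: LM_mul_Pair minus_unique)

lemma elem_ab_2group_LM_mul:
  assumes "\<forall>x::'m::ab_group_add. x + x = 0"
  shows "elem_ab_2group (LM_mul :: klein \<times> 'm \<Rightarrow> _ \<Rightarrow> _)"
  unfolding elem_ab_2group_def is_associative_def is_commutative_def
proof (intro conjI allI exI)
  note mul = LM_mul_Pair_exponent_two[OF assms]
  fix x y z :: "klein \<times> 'm"
  show "LM_mul (LM_mul x y) z = LM_mul x (LM_mul y z)"
    by (cases x; cases y; cases z) (simp add: mul kmul_assoc add.assoc)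
  show "LM_mul x y = LM_mul y x"
    by (cases x; cases y) (simp add: mul kmul_commute add.commute)
  show "LM_mul (K1, 0) x = x" "LM_mul x (K1, 0) = x"
    by (cases x; simp add: mul)+
  show "LM_mul x x = (K1, 0)"
    using assms by (cases x) (simp add: mul)
qed

lemma LM_mul_left_solve:
  "LM_mul (A, u) x = (B, v) \<longleftrightarrow> x = (kmul A B, v - (if kmul A B = K1 then u else - u))"
  by (cases x) (auto simp: LM_mul_Pair kmul_eq_iff_left kmul_eq_K1_iff algebra_simps)

lemma LM_mul_right_solve:
  "LM_mul y (A, u) = (B, v) \<longleftrightarrow> y = (kmul B A, if A = K1 then v - u else u - v)"
  by (cases y) (auto simp: LM_mul_Pair kmul_eq_iff_right algebra_simps)

lemma is_loop_LM_mul: "is_loop (LM_mul :: klein \<times> 'm::ab_group_add \<Rightarrow> _ \<Rightarrow> _)"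
  unfolding is_loop_def
proof (intro conjI allI)
  show "\<exists>e. \<forall>x. LM_mul e x = x \<and> LM_mul x e = (x :: klein \<times> 'm)"
    by (rule exI[of _ "(K1, 0)"]) (auto simp: LM_mul_Pair)
  fix a b :: "klein \<times> 'm"
  show "\<exists>!x. LM_mul a x = b" "\<exists>!y. LM_mul y a = b"
    by (cases a; cases b; simp add: LM_mul_left_solve LM_mul_right_solve)+
qed

lemma LM_mul_right_bol:
  fixes x y z :: "klein \<times> 'm::ab_group_add"
  shows "LM_mul x (LM_mul (LM_mul y z) y) = LM_mul (LM_mul (LM_mul x y) z) y"
proof -
  obtain A B C u v w where "x = (A, u)" "y = (B, v)" "z = (C, w)"
    by (metis surj_pair)
  then show ?thesis
    by (cases A; cases B; cases C) (auto simp: LM_mul_Pair algebra_simps)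
qed

lemma right_bol_loop_LM_mul: "right_bol_loop (LM_mul :: klein \<times> 'm::ab_group_add \<Rightarrow> _ \<Rightarrow> _)"
  unfolding right_bol_loop_def using is_loop_LM_mul LM_mul_right_bol by blast

lemma not_is_associative_LM_mul:
  fixes m :: "'m::ab_group_add"
  assumes "m + m \<noteq> 0"
  shows "\<not> is_associative (LM_mul :: klein \<times> 'm \<Rightarrow> _ \<Rightarrow> _)"
proof
  assume "is_associative (LM_mul :: klein \<times> 'm \<Rightarrow> _ \<Rightarrow> _)"
  then have "LM_mul (LM_mul (K1, m) (Ka, 0)) (Kb, 0) = LM_mul (K1, m) (LM_mul (Ka, 0) (Kb, 0))"
    unfolding is_associative_def by blast
  with assms show False
    by (simp add: LM_mul_Pair add_eq_0_iff eq_commute[of m])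
qed

lemma not_is_commutative_LM_mul:
  fixes m :: "'m::ab_group_add"
  assumes "m + m \<noteq> 0"
  shows "\<not> is_commutative (LM_mul :: klein \<times> 'm \<Rightarrow> _ \<Rightarrow> _)"
proof
  assume "is_commutative (LM_mul :: klein \<times> 'm \<Rightarrow> _ \<Rightarrow> _)"
  then have "LM_mul (K1, m) (Ka, 0) = LM_mul (Ka, 0) (K1, m)"
    unfolding is_commutative_def by blast
  with assms show False
    by (simp add: LM_mul_Pair add_eq_0_iff eq_commute[of m])
qed

theorem proposition3p3:
  shows "((\<forall>x::'m::ab_group_add. x + x = 0) \<longrightarrow> elem_ab_2group (LM_mul :: klein \<times> 'm \<Rightarrow> _ \<Rightarrow> _))
       \<and> (\<not> (\<forall>x::'m. x + x = 0) \<longrightarrow>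
            right_bol_loop (LM_mul :: klein \<times> 'm \<Rightarrow> _ \<Rightarrow> _)
          \<and> \<not> is_associative (LM_mul :: klein \<times> 'm \<Rightarrow> _ \<Rightarrow> _)
          \<and> \<not> is_commutative (LM_mul :: klein \<times> 'm \<Rightarrow> _ \<Rightarrow> _))"
proof (intro conjI impI)
  show "elem_ab_2group (LM_mul :: klein \<times> 'm \<Rightarrow> _ \<Rightarrow> _)" if "\<forall>x::'m. x + x = 0"
    using that by (rule elem_ab_2group_LM_mul)
  show "right_bol_loop (LM_mul :: klein \<times> 'm \<Rightarrow> _ \<Rightarrow> _)"
    by (rule right_bol_loop_LM_mul)
  assume "\<not> (\<forall>x::'m. x + x = 0)"
  then obtain m :: 'm where "m + m \<noteq> 0" by blast
  then show "\<not> is_associative (LM_mul :: klein \<times> 'm \<Rightarrow> _ \<Rightarrow> _)"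
    and "\<not> is_commutative (LM_mul :: klein \<times> 'm \<Rightarrow> _ \<Rightarrow> _)"
    by (rule not_is_associative_LM_mul, rule not_is_commutative_LM_mul)
qed

end
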